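(* Let $\mathsf X$ and $\mathsf A$ be finite sets, let $p:\mathsf X\times\mathsf A\times\mathcal P(\mathsf X)\to\mathcal P(\mathsf X)$ and $r:\mathsf X\times\mathsf A\times\mathcal P(\mathsf X)\to[0,\infty)$, and suppose there are constants $L_1,K_1\ge 0$ such that for all $x,\hat x\in\mathsf X$, $a,\hat a\in\mathsf A$, $\mu,\hat\mu\in\mathcal P(\mathsf X)$: $$|r(x,a,\mu)-r(\hat x,\hat a,\hat\mu)|\le L_1\big(1_{\{x\neq\hat x\}}+2\cdot 1_{\{a\neq\hat a\}}+\|\mu-\hat\mu\|_1\big),$$ $$\|p(\cdot|x,a,\mu)-p(\cdot|\hat x,\hat a,\hat\mu)\|_1\le K_1\big(1_{\{x\neq\hat x\}}+2\cdot 1_{\{a\neq\hat a\}}+\|\mu-\hat\mu\|_1\big).$$ Let $\mathsf U=\mathcal P(\mathsf A)$ and define $P(\cdot|x,u,\mu)=\sum_{a\in\mathsf A}p(\cdot|x,a,\mu)\,u(a)$ and $R(x,u,\mu)=\sum_{a\in\mathsf A}r(x,a,\mu)\,u(a)$. Then for all $x,\hat x\in\mathsf X$, $u,\hat u\in\mathsf U$, $\mu,\hat\mu\in\mathcal P(\mathsf X)$: $$|R(x,u,\mu)-R(\hat x,\hat u,\hat\mu)|\le L_1\big(1_{\{x\neq\hat x\}}+\|u-\hat u\|_1+\|\mu-\hat\mu\|_1\big),$$ $$\|P(\cdot|x,u,\mu)-P(\cdot|\hat x,\hat u,\hat\mu)\|_1\le K_1\big(1_{\{x\neq\hat x\}}+\|u-\hat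 u\|_1+\|\mu-\hat\mu\|_1\big).$$
   Context: For a finite set $\mathsf E$, $\mathcal P(\mathsf E)$ denotes the set of probability distributions on $\mathsf E$, viewed as vectors in $\mathbb R^{\mathsf E}$ and endowed with the $l_1$-norm $\|\cdot\|_1$. *)

theory Defs
  imports "HOL-Analysis.Analysis"
begin

definition pdist :: "('e::finite \<Rightarrow> real) set" where
  "pdist = {v. (\<forall>e. 0 \<le> v e) \<and> (\<Sum>e\<in>UNIV. v e) = 1}"

definition l1dist :: "('e::finite \<Rightarrow> real) \<Rightarrow> ('e \<Rightarrow> real) \<Rightarrow> real" where
  "l1dist v w = (\<Sum>e\<in>UNIV. \<bar>v e - w e\<bar>)"

definition ind :: "bool \<Rightarrow> real" where
  "ind b = (if b then 1 else 0)"

definition Pk :: "('x \<Rightarrow> 'a::finite \<Rightarrow> 'm \<Rightarrow> ('x \<Rightarrow> real)) \<Rightarrow> 'x \<Rightarrow> ('a \<Rightarrow> real) \<Rightarrow> 'm \<Rightarrow> ('x \<Rightarrow> real)" where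
  "Pk p x u \<mu> = (\<lambda>y. \<Sum>a\<in>UNIV. p x a \<mu> y * u a)"

definition Rk :: "('x \<Rightarrow> 'a::finite \<Rightarrow> 'm \<Rightarrow> real) \<Rightarrow> 'x \<Rightarrow> ('a \<Rightarrow> real) \<Rightarrow> 'm \<Rightarrow> real" where
  "Rk r x u \<mu> = (\<Sum>a\<in>UNIV. r x a \<mu> * u a)"

end

theory Submission
  imports Defs
begin

text \<open>Couple \<open>u\<close> and \<open>\<hat>u\<close> maximally: there is a weight \<open>w\<close> on \<open>A \<times> A\<close> with marginals \<open>u\<close>
  and \<open>\<hat>u\<close> that puts only mass \<open>\<parallel>u - \<hat>u\<parallel>\<^sub>1 / 2\<close> off the diagonal. Then
  \<open>R(x,u,\<mu>) - R(\<hat>x,\<hat>u,\<hat>\<mu>) = \<Sum>a b. w(a,b) (r(x,a,\<mu>) - r(\<hat>x,b,\<hat>\<mu>))\<close>, and likewise for \<open>P\<close>,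
  so the term \<open>2 \<cdot> 1{a \<noteq> b}\<close> in the Lipschitz bounds for \<open>r\<close> and \<open>p\<close> is paid only on the
  off-diagonal mass, which costs exactly \<open>\<parallel>u - \<hat>u\<parallel>\<^sub>1\<close>.\<close>

definition is_coupling :: "('a::finite \<Rightarrow> 'a \<Rightarrow> real) \<Rightarrow> ('a \<Rightarrow> real) \<Rightarrow> ('a \<Rightarrow> real) \<Rightarrow> bool" where
  "is_coupling w u v \<longleftrightarrow>
     (\<forall>a b. 0 \<le> w a b) \<and> (\<forall>a. (\<Sum>b\<in>UNIV. w a b) = u a) \<and> (\<forall>b. (\<Sum>a\<in>UNIV. w a b) = v b)"

lemma maximal_coupling_exists:
  fixes u v :: "'a::finite \<Rightarrow> real"
  assumes u_nonneg: "\<And>a. 0 \<le> u a" and v_nonneg: "\<And>a. 0 \<le> v a"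
    and same_mass: "(\<Sum>a\<in>UNIV. u a) = (\<Sum>a\<in>UNIV. v a)"
  shows "\<exists>w. is_coupling w u v \<and> 2 * (\<Sum>a\<in>UNIV. \<Sum>b\<in>UNIV. w a b * ind (a \<noteq> b)) \<le> l1dist u v"
proof -
  define m where "m a = min (u a) (v a)" for a
  define d where "d = (\<Sum>a\<in>UNIV. u a - m a)"
  text \<open>The common part \<open>m\<close> stays on the diagonal; the excesses of \<open>u\<close> and \<open>v\<close> over \<open>m\<close>
    (both of total mass \<open>d\<close>) are coupled independently. If \<open>d = 0\<close> then \<open>u = v\<close>, and
    division by zero makes \<open>w\<close> diagonal.\<close>
  define w where "w a b = (if a = b then m a else 0) + (u a - m a) * (v b - m b) / d" for a b
  have d_v: "(\<Sum>b\<in>UNIV. v b - m b) = d"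
    using same_mass by (simp add: d_def sum_subtractf)
  have u_excess: "0 \<le> u a - m a" and v_excess: "0 \<le> v a - m a" for a
    by (auto simp: m_def)
  have d_nonneg: "0 \<le> d"
    unfolding d_def using u_excess by (rule sum_nonneg)
  have excesses_vanish: "u a - m a = 0 \<and> v a - m a = 0" if "d = 0" for a
    using that d_v u_excess v_excess unfolding d_def
    by (simp add: sum_nonneg_eq_0_iff)
  have "(\<Sum>b\<in>UNIV. w a b) = m a + (u a - m a) * (\<Sum>b\<in>UNIV. v b - m b) / d" for a
    by (simp add: w_def sum.distrib sum_divide_distrib[symmetric] sum_distrib_left[symmetric])
  then have marginal_u: "(\<Sum>b\<in>UNIV. w a b) = u a" for a
    using d_v excesses_vanish by (cases "d = 0") auto
  have "(\<Sum>a\<in>UNIV. w a b) = m b + (\<Sum>a\<in>UNIV. u a - m a) * (v b - m b) / d" for b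
    by (simp add: w_def sum.distrib sum_divide_distrib[symmetric] sum_distrib_right[symmetric])
  then have marginal_v: "(\<Sum>a\<in>UNIV. w a b) = v b" for b
    using excesses_vanish by (cases "d = 0") (auto simp: d_def)
  have "is_coupling w u v"
    using marginal_u marginal_v d_nonneg u_excess v_excess u_nonneg v_nonneg
    by (auto simp: is_coupling_def w_def m_def)
  moreover have "(\<Sum>a\<in>UNIV. \<Sum>b\<in>UNIV. w a b * ind (a \<noteq> b))
      \<le> (\<Sum>a\<in>UNIV. \<Sum>b\<in>UNIV. (u a - m a) * (v b - m b) / d)"
    using u_excess v_excess d_nonneg by (intro sum_mono) (auto simp: w_def ind_def)
  moreover have "\<dots> = d"
    using d_v by (cases "d = 0")
      (auto simp: sum_divide_distrib[symmetric] sum_distrib_left[symmetric]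
        sum_distrib_right[symmetric] d_def)
  moreover have "l1dist u v = (\<Sum>a\<in>UNIV. (u a - m a) + (v a - m a))"
    unfolding l1dist_def by (intro sum.cong) (auto simp: m_def)
  moreover have "\<dots> = 2 * d"
    by (simp only: sum.distrib d_v flip: d_def)
  ultimately show ?thesis
    by (intro exI[of _ w] conjI) linarith+
qed

lemma coupling_diff_weighted_sums:
  assumes "is_coupling w u v"
  shows "(\<Sum>a\<in>UNIV. f a * u a) - (\<Sum>b\<in>UNIV. g b * v b)
       = (\<Sum>a\<in>UNIV. \<Sum>b\<in>UNIV. w a b * (f a - g b))"
proof -
  have "(\<Sum>a\<in>UNIV. f a * u a) = (\<Sum>a\<in>UNIV. f a * (\<Sum>b\<in>UNIV. w a b))"
    using assms by (simp add: is_coupling_def)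
  also have "\<dots> = (\<Sum>a\<in>UNIV. \<Sum>b\<in>UNIV. w a b * f a)"
    by (simp add: sum_distrib_left mult.commute)
  finally have left: "(\<Sum>a\<in>UNIV. f a * u a) = (\<Sum>a\<in>UNIV. \<Sum>b\<in>UNIV. w a b * f a)" .
  have "(\<Sum>b\<in>UNIV. g b * v b) = (\<Sum>b\<in>UNIV. g b * (\<Sum>a\<in>UNIV. w a b))"
    using assms by (simp add: is_coupling_def)
  also have "\<dots> = (\<Sum>b\<in>UNIV. \<Sum>a\<in>UNIV. w a b * g b)"
    by (simp add: sum_distrib_left mult.commute)
  also have "\<dots> = (\<Sum>a\<in>UNIV. \<Sum>b\<in>UNIV. w a b * g b)"
    by (rule sum.swap)
  finally have right: "(\<Sum>b\<in>UNIV. g b * v b) = (\<Sum>a\<in>UNIV. \<Sum>b\<in>UNIV. w a b * g b)" .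
  show ?thesis
    unfolding left right by (simp add: sum_subtractf right_diff_distrib)
qed

lemma coupling_abs_diff_weighted_sums_le:
  assumes "is_coupling w u v"
  shows "\<bar>(\<Sum>a\<in>UNIV. f a * u a) - (\<Sum>b\<in>UNIV. g b * v b)\<bar>
       \<le> (\<Sum>a\<in>UNIV. \<Sum>b\<in>UNIV. w a b * \<bar>f a - g b\<bar>)"
proof -
  have "\<bar>\<Sum>a\<in>UNIV. \<Sum>b\<in>UNIV. w a b * (f a - g b)\<bar>
      \<le> (\<Sum>a\<in>UNIV. \<Sum>b\<in>UNIV. \<bar>w a b * (f a - g b)\<bar>)"
    by (rule order_trans[OF sum_abs sum_mono[OF sum_abs]])
  also have "\<dots> = (\<Sum>a\<in>UNIV. \<Sum>b\<in>UNIV. w a b * \<bar>f a - g b\<bar>)"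
    using assms by (simp add: is_coupling_def abs_mult)
  finally show ?thesis
    unfolding coupling_diff_weighted_sums[OF assms] .
qed

lemma coupling_l1dist_mixtures_le:
  fixes F G :: "'a::finite \<Rightarrow> 'e::finite \<Rightarrow> real"
  assumes "is_coupling w u v"
  shows "l1dist (\<lambda>e. \<Sum>a\<in>UNIV. F a e * u a) (\<lambda>e. \<Sum>b\<in>UNIV. G b e * v b)
       \<le> (\<Sum>a\<in>UNIV. \<Sum>b\<in>UNIV. w a b * l1dist (F a) (G b))"
proof -
  have "l1dist (\<lambda>e. \<Sum>a\<in>UNIV. F a e * u a) (\<lambda>e. \<Sum>b\<in>UNIV. G b e * v b)
      \<le> (\<Sum>e\<in>UNIV. \<Sum>a\<in>UNIV. \<Sum>b\<in>UNIV. w a b * \<bar>F a e - G b e\<bar>)"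
    unfolding l1dist_def
    by (intro sum_mono coupling_abs_diff_weighted_sums_le[OF assms])
  also have "\<dots> = (\<Sum>a\<in>UNIV. \<Sum>b\<in>UNIV. w a b * l1dist (F a) (G b))"
    unfolding l1dist_def sum_distrib_left
    by (subst sum.swap) (simp add: sum.swap[where B = "UNIV :: 'e set"])
  finally show ?thesis .
qed

lemma coupling_expected_cost_le:
  assumes coupling: "is_coupling w u v" and u: "u \<in> pdist"
    and off_diagonal: "2 * (\<Sum>a\<in>UNIV. \<Sum>b\<in>UNIV. w a b * ind (a \<noteq> b)) \<le> l1dist u v"
    and C_nonneg: "0 \<le> C" and cost_le: "\<And>a b. c a b \<le> C * (D + 2 * ind (a \<noteq> b))"
  shows "(\<Sum>a\<in>UNIV. \<Sum>b\<in>UNIV. w a b * c a b) \<le> C * (D + l1dist u v)"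
proof -
  have total_mass: "(\<Sum>a\<in>UNIV. \<Sum>b\<in>UNIV. w a b) = 1"
    using coupling u by (simp add: is_coupling_def pdist_def)
  have "(\<Sum>a\<in>UNIV. \<Sum>b\<in>UNIV. w a b * c a b)
      \<le> (\<Sum>a\<in>UNIV. \<Sum>b\<in>UNIV. w a b * (C * (D + 2 * ind (a \<noteq> b))))"
    using coupling by (intro sum_mono mult_left_mono cost_le) (simp add: is_coupling_def)
  also have "\<dots> = C * D * (\<Sum>a\<in>UNIV. \<Sum>b\<in>UNIV. w a b)
      + C * (2 * (\<Sum>a\<in>UNIV. \<Sum>b\<in>UNIV. w a b * ind (a \<noteq> b)))"
    by (simp add: algebra_simps sum.distrib sum_distrib_left)
  also have "\<dots> \<le> C * (D + l1dist u v)"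
    using total_mass off_diagonal C_nonneg by (simp add: mult_left_mono distrib_left)
  finally show ?thesis .
qed

theorem proposition1:
  fixes p :: "'x::finite \<Rightarrow> 'a::finite \<Rightarrow> ('x \<Rightarrow> real) \<Rightarrow> ('x \<Rightarrow> real)"
    and r :: "'x \<Rightarrow> 'a \<Rightarrow> ('x \<Rightarrow> real) \<Rightarrow> real"
    and L1 K1 :: real
  assumes p_dist: "\<And>x a \<mu>. \<mu> \<in> pdist \<Longrightarrow> p x a \<mu> \<in> pdist"
    and r_nonneg: "\<And>x a \<mu>. \<mu> \<in> pdist \<Longrightarrow> 0 \<le> r x a \<mu>"
    and L1_nonneg: "0 \<le> L1" and K1_nonneg: "0 \<le> K1"
    and r_lip: "\<And>x xh a ah \<mu> \<mu>h. \<mu> \<in> pdist \<Longrightarrow> \<mu>h \<in> pdist \<Longrightarrow>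
        \<bar>r x a \<mu> - r xh ah \<mu>h\<bar> \<le> L1 * (ind (x \<noteq> xh) + 2 * ind (a \<noteq> ah) + l1dist \<mu> \<mu>h)"
    and p_lip: "\<And>x xh a ah \<mu> \<mu>h. \<mu> \<in> pdist \<Longrightarrow> \<mu>h \<in> pdist \<Longrightarrow>
        l1dist (p x a \<mu>) (p xh ah \<mu>h) \<le> K1 * (ind (x \<noteq> xh) + 2 * ind (a \<noteq> ah) + l1dist \<mu> \<mu>h)"
  shows "\<forall>x xh u uh \<mu> \<mu>h. u \<in> pdist \<longrightarrow> uh \<in> pdist \<longrightarrow> \<mu> \<in> pdist \<longrightarrow> \<mu>h \<in> pdist \<longrightarrow>
           \<bar>Rk r x u \<mu> - Rk r xh uh \<mu>h\<bar> \<le> L1 * (ind (x \<noteq> xh) + l1dist u uh + l1dist \<mu> \<mu>h)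
         \<and> l1dist (Pk p x u \<mu>) (Pk p xh uh \<mu>h) \<le> K1 * (ind (x \<noteq> xh) + l1dist u uh + l1dist \<mu> \<mu>h)"
proof (intro allI impI)
  fix x xh :: 'x and u uh :: "'a \<Rightarrow> real" and \<mu> \<mu>h :: "'x \<Rightarrow> real"
  assume u: "u \<in> pdist" and uh: "uh \<in> pdist" and \<mu>: "\<mu> \<in> pdist" and \<mu>h: "\<mu>h \<in> pdist"
  obtain w where coupling: "is_coupling w u uh"
    and off_diagonal: "2 * (\<Sum>a\<in>UNIV. \<Sum>b\<in>UNIV. w a b * ind (a \<noteq> b)) \<le> l1dist u uh"
    using maximal_coupling_exists[of u uh] u uh by (auto simp: pdist_def)
  let ?D = "ind (x \<noteq> xh) + l1dist \<mu> \<mu>h"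
  have "\<bar>Rk r x u \<mu> - Rk r xh uh \<mu>h\<bar> \<le> (\<Sum>a\<in>UNIV. \<Sum>b\<in>UNIV. w a b * \<bar>r x a \<mu> - r xh b \<mu>h\<bar>)"
    unfolding Rk_def by (rule coupling_abs_diff_weighted_sums_le[OF coupling])
  also have "\<dots> \<le> L1 * (?D + l1dist u uh)"
    using r_lip[OF \<mu> \<mu>h]
    by (intro coupling_expected_cost_le[OF coupling u off_diagonal L1_nonneg]) (simp add: algebra_simps)
  finally have R: "\<bar>Rk r x u \<mu> - Rk r xh uh \<mu>h\<bar> \<le> L1 * (?D + l1dist u uh)" .
  have "l1dist (Pk p x u \<mu>) (Pk p xh uh \<mu>h)
      \<le> (\<Sum>a\<in>UNIV. \<Sum>b\<in>UNIV. w a b * l1dist (p x a \<mu>) (p xh b \<mu>h))"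
    unfolding Pk_def by (rule coupling_l1dist_mixtures_le[OF coupling])
  also have "\<dots> \<le> K1 * (?D + l1dist u uh)"
    using p_lip[OF \<mu> \<mu>h]
    by (intro coupling_expected_cost_le[OF coupling u off_diagonal K1_nonneg]) (simp add: algebra_simps)
  finally have P: "l1dist (Pk p x u \<mu>) (Pk p xh uh \<mu>h) \<le> K1 * (?D + l1dist u uh)" .
  show "\<bar>Rk r x u \<mu> - Rk r xh uh \<mu>h\<bar> \<le> L1 * (ind (x \<noteq> xh) + l1dist u uh + l1dist \<mu> \<mu>h)
      \<and> l1dist (Pk p x u \<mu>) (Pk p xh uh \<mu>h) \<le> K1 * (ind (x \<noteq> xh) + l1dist u uh + l1dist \<mu> \<mu>h)"
    using R P by (simp add: algebra_simps)
qed

end
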